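(* For $n,k\ge0$ let $h(n,k)$ be the number of $k$-flats of $I(\mathfrak{gl}_n,V\oplus\bigwedge^2)$. Then, as formal power series, \[ H(s,t)=\sum_{n,k\ge0}h(n,k)s^nt^k=\frac{(1-s)(1-st+s^2t)}{1-2s+s^2-2st+3s^2t-2s^3t+s^2t^2-2s^3t^2+s^4t^2}. \]
   Context: Identify the diagonal Cartan subalgebra of $\mathfrak{gl}_n$ with $\mathbb{R}^n$ with coordinates $x_1,\dots,x_n$. Let $W=\{x_1\ge\cdots\ge x_n\}$ (closed Weyl chamber). For $1\le i\le j\le n$ let $\lambda_{i,j}^\perp$ be the hyperplane $x_i+x_j=0$ (for $i=j$: $x_i=0$); these are the kernels of the weights of $V\oplus\bigwedge^2V$ and $I(\mathfrak{gl}_n,V\oplus\bigwedge^2)$ is the arrangement of these hyperplanes restricted to $W$. A flat is a set of the form $W\cap\bigcap_{(i,j)\in T}\lambda_{i,j}^\perp$ for some (possibly empty) set $T$ of pairs $i\le j$ (the empty $T$ gives $W$); a $k$-flat is a flat whose linear span has dimension $k$. Distinct flats are counted as distinct subsets of $W$. *)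

theory Defs
  imports "HOL-Library.Function_Algebras" "HOL-Computational_Algebra.Formal_Power_Series"
begin

text \<open>Points of R^n are modelled as functions x :: nat => real with x i = 0 for i >= n;
  coordinate x_{i+1} of the paper is x i here (0-based).\<close>

definition Rn :: "nat \<Rightarrow> (nat \<Rightarrow> real) set" where
  "Rn n = {x. \<forall>i\<ge>n. x i = 0}"

definition fscale :: "real \<Rightarrow> (nat \<Rightarrow> real) \<Rightarrow> (nat \<Rightarrow> real)" where
  "fscale c x = (\<lambda>i. c * x i)"

definition weyl :: "nat \<Rightarrow> (nat \<Rightarrow> real) set" where
  "weyl n = {x \<in> Rn n. \<forall>i j. i \<le> j \<and> j < n \<longrightarrow> x j \<le> x i}"

text \<open>Index pairs (i,j), i <= j, of the weights of V + wedge^2 V.\<close>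
definition wpairs :: "nat \<Rightarrow> (nat \<times> nat) set" where
  "wpairs n = {(i, j). i \<le> j \<and> j < n}"

definition hyp :: "nat \<Rightarrow> nat \<times> nat \<Rightarrow> (nat \<Rightarrow> real) set" where
  "hyp n p = {x \<in> Rn n. (if fst p = snd p then x (fst p) = 0 else x (fst p) + x (snd p) = 0)}"

definition flat_of :: "nat \<Rightarrow> (nat \<times> nat) set \<Rightarrow> (nat \<Rightarrow> real) set" where
  "flat_of n T = weyl n \<inter> (\<Inter>p\<in>T. hyp n p)"

definition flats :: "nat \<Rightarrow> (nat \<Rightarrow> real) set set" where
  "flats n = {flat_of n T | T. T \<subseteq> wpairs n}"

definition h :: "nat \<Rightarrow> nat \<Rightarrow> nat" where
  "h n k = card {F \<in> flats n. vector_space.dim fscale F = k}"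

text \<open>Bivariate formal power series over Q: an element of (rat fps) fps, outer variable s, inner t.\<close>
definition H :: "rat fps fps" where
  "H = Abs_fps (\<lambda>n. Abs_fps (\<lambda>k. of_nat (h n k)))"

definition S :: "rat fps fps" where "S = fps_X"
definition T :: "rat fps fps" where "T = fps_const fps_X"

end

theory Submission
  imports Defs
begin

text \<open>A flat is cut out by the hyperplanes through a generic point of it, so flats correspond
  bijectively to the sets \<open>T\<^sub>x\<close> of pairs \<open>(i, j)\<close> with \<open>x\<^sub>i + x\<^sub>j = 0\<close>, \<open>x \<in> W\<close>. Such a set
  either consists of all pairs inside a block of zero coordinates, or, with \<open>c > 0\<close> the largest
  value for which \<open>-c\<close> also occurs, it consists of the full rectangle between the \<open>p\<close> coordinates
  equal to \<open>c\<close> and the \<open>q\<close> coordinates equal to \<open>-c\<close>, together with the pairs of the smaller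
  chamber formed by the \<open>m\<close> coordinates strictly between \<open>-c\<close> and \<open>c\<close>. At a point without
  accidental coincidences the dimension of the flat is the number of distinct nonzero values
  \<open>|x\<^sub>i|\<close>; hence a zero block of size \<open>z\<close> has dimension \<open>n - z\<close>, and the second kind of pattern
  has dimension \<open>u + w + 1\<close> plus that of the inner pattern, \<open>u\<close> and \<open>w\<close> counting the coordinates
  above \<open>c\<close> and below \<open>-c\<close>. Counting the parameters \<open>u, p, q, w\<close> gives
  \<open>H = M + E H\<close> with \<open>E = s\<^sup>2t / ((1 - s)\<^sup>2 (1 - st)\<^sup>2)\<close> and
  \<open>M = (1 - st + s\<^sup>2t) / ((1 - s) (1 - st)\<^sup>2)\<close>.\<close>

section \<open>Flats as sets of vanishing weights\<close>

definition weight :: "nat \<times> nat \<Rightarrow> (nat \<Rightarrow> real) \<Rightarrow> real" where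
  "weight p x = (if fst p = snd p then x (fst p) else x (fst p) + x (snd p))"

definition vanishing_pairs :: "nat \<Rightarrow> (nat \<Rightarrow> real) \<Rightarrow> (nat \<times> nat) set" where
  "vanishing_pairs n x = {p \<in> wpairs n. x \<in> hyp n p}"

definition realizable :: "nat \<Rightarrow> (nat \<times> nat) set set" where
  "realizable n = vanishing_pairs n ` weyl n"

definition flat_dim :: "nat \<Rightarrow> (nat \<times> nat) set \<Rightarrow> nat" where
  "flat_dim n Q = vector_space.dim fscale (flat_of n Q)"

lemma hyp_iff_weight: "x \<in> hyp n p \<longleftrightarrow> x \<in> Rn n \<and> weight p x = 0"
  by (simp add: hyp_def weight_def)

lemma weight_add_fscale: "weight p (x + fscale c y) = weight p x + c * weight p y"
  by (simp add: weight_def fscale_def algebra_simps)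

lemma weight_fscale: "weight p (fscale c x) = c * weight p x"
  by (simp add: weight_def fscale_def algebra_simps)

lemma vanishing_pairs_iff:
  "x \<in> weyl n \<Longrightarrow> (i, j) \<in> vanishing_pairs n x \<longleftrightarrow> i \<le> j \<and> j < n \<and> weight (i, j) x = 0"
  by (auto simp: vanishing_pairs_def wpairs_def hyp_iff_weight weyl_def)

lemma finite_wpairs: "finite (wpairs n)"
  by (rule finite_subset[of _ "{..<n} \<times> {..<n}"]) (auto simp: wpairs_def)

lemma realizable_subset_wpairs: "Q \<in> realizable n \<Longrightarrow> Q \<subseteq> wpairs n"
  by (auto simp: realizable_def vanishing_pairs_def)

lemma finite_realizable: "finite (realizable n)"
  using realizable_subset_wpairs finite_wpairs
  by (metis Pow_iff finite_Pow_iff finite_subset subsetI)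

text \<open>Inside a cone, moving from a point \<open>x\<close> towards a point \<open>y\<close> with \<open>L y \<noteq> 0\<close> kills the zero
  of \<open>L\<close> at \<open>x\<close> and creates new zeros of the other functionals only for finitely many step sizes.\<close>

lemma exists_generic_point:
  fixes F :: "(nat \<Rightarrow> real) set" and L :: "'p \<Rightarrow> (nat \<Rightarrow> real) \<Rightarrow> real"
  assumes "finite P" and "x0 \<in> F"
    and cone: "\<And>x y c. x \<in> F \<Longrightarrow> y \<in> F \<Longrightarrow> c > 0 \<Longrightarrow> x + fscale c y \<in> F"
    and linear: "\<And>p x y c. L p (x + fscale c y) = L p x + c * L p y"
  shows "\<exists>x\<in>F. \<forall>p\<in>P. L p x = 0 \<longrightarrow> (\<forall>y\<in>F. L p y = 0)"
  using \<open>finite P\<close>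
proof (induction P rule: finite_induct)
  case empty
  then show ?case using \<open>x0 \<in> F\<close> by blast
next
  case (insert p P)
  then obtain x where x: "x \<in> F" and generic: "\<forall>q\<in>P. L q x = 0 \<longrightarrow> (\<forall>y\<in>F. L q y = 0)"
    by blast
  show ?case
  proof (cases "(\<forall>y\<in>F. L p y = 0) \<or> L p x \<noteq> 0")
    case True
    then show ?thesis using x generic by blast
  next
    case False
    then obtain y where y: "y \<in> F" "L p y \<noteq> 0" and px: "L p x = 0" by blast
    have "finite ((\<lambda>q. - L q x / L q y) ` P)" using insert.hyps by simp
    then have "infinite ({0<..} - (\<lambda>q. - L q x / L q y) ` P)"
      using Diff_infinite_finite infinite_Ioi by blast
    then have "{0<..} - (\<lambda>q. - L q x / L q y) ` P \<noteq> {}" by (rule infinite_imp_nonempty)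
    then obtain c where "c \<in> {0<..} - (\<lambda>q. - L q x / L q y) ` P" by blast
    then have c: "c > 0" "c \<notin> (\<lambda>q. - L q x / L q y) ` P" by auto
    have "L q (x + fscale c y) = 0 \<Longrightarrow> \<forall>z\<in>F. L q z = 0" if q: "q \<in> insert p P" for q
    proof -
      assume "L q (x + fscale c y) = 0"
      then have zero: "L q x + c * L q y = 0" by (simp add: linear)
      show ?thesis
      proof (cases "q = p")
        case True
        then show ?thesis using zero px c y(2) by simp
      next
        case False
        then have "q \<in> P" using q by simp
        moreover have "L q y = 0"
        proof (rule ccontr)
          assume "L q y \<noteq> 0"
          then have "c = - L q x / L q y" using zero by (simp add: field_simps)
          then show False using c(2) \<open>q \<in> P\<close> by blast
        qed
        ultimately show ?thesis using zero generic by simp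
      qed
    qed
    then show ?thesis using cone[OF x y(1) c(1)] by blast
  qed
qed

lemma flat_add_fscale:
  assumes "x \<in> flat_of n Q" "y \<in> flat_of n Q" "c > 0"
  shows "x + fscale c y \<in> flat_of n Q"
proof -
  have chamber: "x \<in> weyl n" "y \<in> weyl n" using assms by (auto simp: flat_of_def)
  have "x + fscale c y \<in> weyl n"
    using chamber \<open>c > 0\<close>
    by (auto simp: weyl_def Rn_def fscale_def intro!: add_mono mult_left_mono)
  moreover have "x + fscale c y \<in> hyp n p" if "p \<in> Q" for p
  proof -
    have "x \<in> hyp n p" "y \<in> hyp n p" using assms that by (auto simp: flat_of_def)
    then show ?thesis
      using \<open>x + fscale c y \<in> weyl n\<close> by (simp add: hyp_iff_weight weight_add_fscale weyl_def)
  qed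
  ultimately show ?thesis by (simp add: flat_of_def)
qed

lemma zero_in_flat: "(0 :: nat \<Rightarrow> real) \<in> flat_of n Q"
  by (simp add: flat_of_def weyl_def Rn_def hyp_def)

lemma in_flat_vanishing_pairs: "x \<in> weyl n \<Longrightarrow> x \<in> flat_of n (vanishing_pairs n x)"
  by (simp add: flat_of_def vanishing_pairs_def)

lemma flat_eq_flat_vanishing_pairs:
  assumes "Q \<subseteq> wpairs n"
  shows "\<exists>x \<in> weyl n. flat_of n Q = flat_of n (vanishing_pairs n x)"
proof -
  let ?F = "flat_of n Q"
  obtain x where x: "x \<in> ?F" and generic: "\<forall>p\<in>wpairs n. weight p x = 0 \<longrightarrow> (\<forall>y\<in>?F. weight p y = 0)"
    using exists_generic_point[of "wpairs n" 0 ?F weight]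
    by (metis finite_wpairs zero_in_flat flat_add_fscale weight_add_fscale)
  have "x \<in> weyl n" using x by (simp add: flat_of_def)
  moreover have "?F \<subseteq> flat_of n (vanishing_pairs n x)"
    using generic by (auto simp: flat_of_def vanishing_pairs_def hyp_iff_weight weyl_def)
  moreover have "Q \<subseteq> vanishing_pairs n x"
    using assms x by (auto simp: vanishing_pairs_def flat_of_def)
  then have "flat_of n (vanishing_pairs n x) \<subseteq> ?F" by (auto simp: flat_of_def)
  ultimately show ?thesis by blast
qed

lemma flats_eq_image_realizable: "flats n = flat_of n ` realizable n"
proof
  show "flats n \<subseteq> flat_of n ` realizable n"
  proof
    fix F assume "F \<in> flats n"
    then obtain Q where "Q \<subseteq> wpairs n" "F = flat_of n Q" by (auto simp: flats_def)
    then obtain x where "x \<in> weyl n" "F = flat_of n (vanishing_pairs n x)"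
      using flat_eq_flat_vanishing_pairs by blast
    then show "F \<in> flat_of n ` realizable n" by (auto simp: realizable_def)
  qed
  show "flat_of n ` realizable n \<subseteq> flats n"
    by (auto simp: flats_def realizable_def vanishing_pairs_def)
qed

lemma inj_on_flat_of_realizable: "inj_on (flat_of n) (realizable n)"
proof
  fix Q1 Q2 assume "Q1 \<in> realizable n" "Q2 \<in> realizable n" and eq: "flat_of n Q1 = flat_of n Q2"
  then obtain x1 x2 where x: "x1 \<in> weyl n" "x2 \<in> weyl n"
    and Q: "Q1 = vanishing_pairs n x1" "Q2 = vanishing_pairs n x2"
    by (auto simp: realizable_def)
  have "x1 \<in> flat_of n Q2" "x2 \<in> flat_of n Q1"
    using in_flat_vanishing_pairs x eq Q by auto
  then show "Q1 = Q2" using x Q by (auto simp: flat_of_def vanishing_pairs_def)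
qed

lemma h_eq_card_realizable: "h n k = card {Q \<in> realizable n. flat_dim n Q = k}"
proof -
  have "{F \<in> flats n. vector_space.dim fscale F = k} =
      flat_of n ` {Q \<in> realizable n. flat_dim n Q = k}"
    unfolding flats_eq_image_realizable flat_dim_def by auto
  moreover have "inj_on (flat_of n) {Q \<in> realizable n. flat_dim n Q = k}"
    using inj_on_flat_of_realizable by (rule inj_on_subset) auto
  ultimately show ?thesis unfolding h_def by (simp add: card_image)
qed

section \<open>The dimension of a flat\<close>

interpretation fs: vector_space fscale
  by unfold_locales (auto simp: fscale_def fun_eq_iff algebra_simps)

lemma fscale_apply [simp]: "fscale c x i = c * x i"
  by (simp add: fscale_def)

lemma sum_fun_apply: "(sum f A) i = (\<Sum>a\<in>A. f a i)" for f :: "'a \<Rightarrow> nat \<Rightarrow> real"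
  by (induction A rule: infinite_finite_induct) auto

text \<open>A point is tight if every coincidence \<open>x\<^sub>i = x\<^sub>j\<close> is forced by the hyperplanes through it:
  either \<open>x\<^sub>i = 0\<close>, or \<open>x\<^sub>i + x\<^sub>l = 0 = x\<^sub>j + x\<^sub>l\<close> for some \<open>l\<close>.\<close>

definition tight :: "nat \<Rightarrow> (nat \<Rightarrow> real) \<Rightarrow> bool" where
  "tight n x \<longleftrightarrow> (\<forall>i<n. \<forall>j<n. x i = x j \<longrightarrow> i = j \<or> x i = 0 \<or> (\<exists>l<n. x l = - x i))"

definition abs_values :: "nat \<Rightarrow> (nat \<Rightarrow> real) \<Rightarrow> real set" where
  "abs_values n x = {\<bar>x i\<bar> | i. i < n \<and> x i \<noteq> 0}"

definition sign_space :: "nat \<Rightarrow> (nat \<Rightarrow> real) \<Rightarrow> (nat \<Rightarrow> real) set" where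
  "sign_space n x = {y \<in> Rn n. \<forall>i<n. \<forall>j<n.
     (x i = x j \<longrightarrow> y i = y j) \<and> (x i = - x j \<longrightarrow> y i = - y j)}"

lemma sign_spaceI:
  "y \<in> Rn n \<Longrightarrow> (\<And>i j. i < n \<Longrightarrow> j < n \<Longrightarrow> x i = x j \<Longrightarrow> y i = y j)
    \<Longrightarrow> (\<And>i j. i < n \<Longrightarrow> j < n \<Longrightarrow> x i = - x j \<Longrightarrow> y i = - y j) \<Longrightarrow> y \<in> sign_space n x"
  unfolding sign_space_def by blast

lemma sign_space_Rn: "y \<in> sign_space n x \<Longrightarrow> y \<in> Rn n"
  by (simp add: sign_space_def)

lemma sign_space_eq: "y \<in> sign_space n x \<Longrightarrow> i < n \<Longrightarrow> j < n \<Longrightarrow> x i = x j \<Longrightarrow> y i = y j"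
  unfolding sign_space_def by blast

lemma sign_space_neg: "y \<in> sign_space n x \<Longrightarrow> i < n \<Longrightarrow> j < n \<Longrightarrow> x i = - x j \<Longrightarrow> y i = - y j"
  unfolding sign_space_def by blast

lemma subspace_sign_space: "fs.subspace (sign_space n x)"
  unfolding fs.subspace_def
proof (intro conjI ballI allI)
  show "0 \<in> sign_space n x" by (rule sign_spaceI) (simp_all add: Rn_def)
next
  fix y z assume y: "y \<in> sign_space n x" and z: "z \<in> sign_space n x"
  show "y + z \<in> sign_space n x"
  proof (rule sign_spaceI)
    show "y + z \<in> Rn n" using sign_space_Rn[OF y] sign_space_Rn[OF z] by (simp add: Rn_def)
  next
    fix i j assume ij: "i < n" "j < n" "x i = x j"
    then show "(y + z) i = (y + z) j" using sign_space_eq[OF y ij] sign_space_eq[OF z ij] by simp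
  next
    fix i j assume ij: "i < n" "j < n" "x i = - x j"
    then show "(y + z) i = - (y + z) j" using sign_space_neg[OF y ij] sign_space_neg[OF z ij]
      by simp
  qed
next
  fix c y assume y: "y \<in> sign_space n x"
  show "fscale c y \<in> sign_space n x"
  proof (rule sign_spaceI)
    show "fscale c y \<in> Rn n" using sign_space_Rn[OF y] by (simp add: Rn_def)
  next
    fix i j assume ij: "i < n" "j < n" "x i = x j"
    then show "fscale c y i = fscale c y j" using sign_space_eq[OF y ij] by simp
  next
    fix i j assume ij: "i < n" "j < n" "x i = - x j"
    then show "fscale c y i = - fscale c y j" using sign_space_neg[OF y ij] by simp
  qed
qed

lemma flat_vanishing_pairs_weight:
  assumes "x \<in> weyl n" "y \<in> flat_of n (vanishing_pairs n x)" "i < n" "j < n" "x i + x j = 0"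
  shows "y i + y j = 0"
proof -
  have "(min i j, max i j) \<in> vanishing_pairs n x"
    using assms
    by (auto simp: vanishing_pairs_def wpairs_def hyp_def weyl_def min_def max_def add.commute)
  then have "y \<in> hyp n (min i j, max i j)" using assms(2) by (auto simp: flat_of_def)
  then show ?thesis by (auto simp: hyp_def min_def max_def add.commute split: if_splits)
qed

lemma flat_subset_sign_space:
  assumes x: "x \<in> weyl n" and "tight n x"
  shows "flat_of n (vanishing_pairs n x) \<subseteq> sign_space n x"
proof
  fix y assume y: "y \<in> flat_of n (vanishing_pairs n x)"
  note weight_zero = flat_vanishing_pairs_weight[OF x y]
  show "y \<in> sign_space n x"
  proof (rule sign_spaceI)
    show "y \<in> Rn n" using y by (auto simp: flat_of_def weyl_def)
  next
    fix i j assume ij: "i < n" "j < n" "x i = x j"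
    consider "i = j" | "x i = 0" | l where "l < n" "x l = - x i"
      using \<open>tight n x\<close> ij unfolding tight_def by blast
    then show "y i = y j"
    proof cases
      case 2
      then show ?thesis using weight_zero[of i i] weight_zero[of j j] ij by simp
    next
      case 3
      then show ?thesis using weight_zero[of i l] weight_zero[of j l] ij by simp
    qed simp
  next
    fix i j assume "i < n" "j < n" "x i = - x j"
    then show "y i = - y j" using weight_zero[of i j] by simp
  qed
qed

text \<open>For \<open>y\<close> in the sign space of \<open>x\<close> the point \<open>M x + c y\<close> satisfies every equation of the flat
  through \<open>x\<close>; a large \<open>M\<close> makes it decreasing as well.\<close>

lemma sign_space_translate_in_flat:
  assumes x: "x \<in> weyl n" and y: "y \<in> sign_space n x" and "M \<ge> 0" "c \<in> {0, 1}"
    and large: "\<And>i j. i < n \<Longrightarrow> j < n \<Longrightarrow> x j < x i \<Longrightarrow> y j - y i \<le> M * (x i - x j)"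
  shows "fscale M x + fscale c y \<in> flat_of n (vanishing_pairs n x)"
proof -
  let ?z = "fscale M x + fscale c y"
  have "?z \<in> Rn n" using x sign_space_Rn[OF y] by (simp add: Rn_def weyl_def)
  moreover have "?z j \<le> ?z i" if "i \<le> j" "j < n" for i j
  proof (cases "x j < x i")
    case True
    then show ?thesis
      using large[of i j] that \<open>M \<ge> 0\<close> \<open>c \<in> {0, 1}\<close> mult_left_mono[of "x j" "x i" M]
      by (auto simp: algebra_simps)
  next
    case False
    moreover have "x j \<le> x i" using x that by (simp add: weyl_def)
    ultimately have "x j = x i" by simp
    then show ?thesis using sign_space_eq[OF y, of j i] that by simp
  qed
  moreover have "?z \<in> hyp n p" if vanishing: "p \<in> vanishing_pairs n x" for p
  proof -
    obtain i j where p: "p = (i, j)" "i \<le> j" "j < n" and "weight p x = 0"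
      using vanishing by (auto simp: vanishing_pairs_def wpairs_def hyp_iff_weight)
    then have "weight p y = 0"
      using sign_space_neg[OF y, of i j] sign_space_neg[OF y, of i i] by (auto simp: weight_def)
    then show ?thesis
      using \<open>?z \<in> Rn n\<close> \<open>weight p x = 0\<close>
      by (simp add: hyp_iff_weight weight_add_fscale weight_fscale)
  qed
  ultimately show ?thesis by (simp add: flat_of_def weyl_def)
qed

lemma sign_space_subset_span_flat:
  assumes x: "x \<in> weyl n"
  shows "sign_space n x \<subseteq> fs.span (flat_of n (vanishing_pairs n x))"
proof
  fix y assume y: "y \<in> sign_space n x"
  define P where "P = {(i, j). i < n \<and> j < n \<and> x j < x i}"
  define M where "M = Max (insert 0 ((\<lambda>(i, j). (y j - y i) / (x i - x j)) ` P))"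
  have "finite P" unfolding P_def by (rule finite_subset[of _ "{..<n} \<times> {..<n}"]) auto
  then have "M \<ge> 0" by (simp add: M_def)
  have large: "y j - y i \<le> M * (x i - x j)" if "i < n" "j < n" "x j < x i" for i j
  proof -
    have "(y j - y i) / (x i - x j) \<le> M"
      unfolding M_def using \<open>finite P\<close> that by (intro Max_ge) (auto simp: P_def)
    then show ?thesis using that by (simp add: divide_le_eq)
  qed
  note in_flat = sign_space_translate_in_flat[OF x y \<open>M \<ge> 0\<close> _ large]
  have "y = (fscale M x + fscale 1 y) - (fscale M x + fscale 0 y)"
    by (simp add: fun_eq_iff)
  then show "y \<in> fs.span (flat_of n (vanishing_pairs n x))"
    using in_flat[of 0] in_flat[of 1] by (metis fs.span_base fs.span_diff insertCI)
qed

lemma span_flat_eq_sign_space: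
  assumes "x \<in> weyl n" "tight n x"
  shows "fs.span (flat_of n (vanishing_pairs n x)) = sign_space n x"
  using sign_space_subset_span_flat fs.span_minimal[OF flat_subset_sign_space subspace_sign_space]
    assms by blast

definition level_vector :: "nat \<Rightarrow> (nat \<Rightarrow> real) \<Rightarrow> real \<Rightarrow> nat \<Rightarrow> real" where
  "level_vector n x v = (\<lambda>i. if i < n \<and> x i = v then 1 else if i < n \<and> x i = - v then -1 else 0)"

lemma finite_abs_values: "finite (abs_values n x)"
  by (rule finite_subset[of _ "(\<lambda>i. \<bar>x i\<bar>) ` {..<n}"]) (auto simp: abs_values_def)

lemma abs_values_pos: "v \<in> abs_values n x \<Longrightarrow> v > 0"
  by (auto simp: abs_values_def)

lemma abs_in_abs_values: "i < n \<Longrightarrow> x i \<noteq> 0 \<Longrightarrow> \<bar>x i\<bar> \<in> abs_values n x"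
  by (auto simp: abs_values_def)

lemma level_vector_at: "i < n \<Longrightarrow> x i \<noteq> 0 \<Longrightarrow> level_vector n x \<bar>x i\<bar> i = sgn (x i)"
  by (auto simp: level_vector_def sgn_if abs_if)

lemma level_vector_eq_0:
  "v \<in> abs_values n x \<Longrightarrow> \<not> (i < n \<and> x i \<noteq> 0 \<and> v = \<bar>x i\<bar>) \<Longrightarrow> level_vector n x v i = 0"
  using abs_values_pos[of v n x] by (auto simp: level_vector_def abs_if)

lemma sum_level_vector:
  "(\<Sum>v\<in>abs_values n x. f v * level_vector n x v i) =
    (if i < n \<and> x i \<noteq> 0 then f \<bar>x i\<bar> * sgn (x i) else 0)"
proof (cases "i < n \<and> x i \<noteq> 0")
  case True
  then have "\<bar>x i\<bar> \<in> abs_values n x" by (simp add: abs_in_abs_values)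
  then have "(\<Sum>v\<in>abs_values n x. f v * level_vector n x v i) = f \<bar>x i\<bar> * level_vector n x \<bar>x i\<bar> i
      + (\<Sum>v\<in>abs_values n x - {\<bar>x i\<bar>}. f v * level_vector n x v i)"
    by (rule sum.remove[OF finite_abs_values])
  also have "(\<Sum>v\<in>abs_values n x - {\<bar>x i\<bar>}. f v * level_vector n x v i) = 0"
    by (rule sum.neutral) (auto simp: level_vector_eq_0)
  finally show ?thesis using True level_vector_at by simp
qed (auto intro!: sum.neutral simp: level_vector_eq_0)

lemma inj_on_level_vector: "inj_on (level_vector n x) (abs_values n x)"
proof
  fix v w assume v: "v \<in> abs_values n x" and w: "w \<in> abs_values n x"
    and eq: "level_vector n x v = level_vector n x w"
  obtain i where i: "i < n" "x i \<noteq> 0" "v = \<bar>x i\<bar>" using v by (auto simp: abs_values_def)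
  then have "level_vector n x w i \<noteq> 0" using eq level_vector_at[of i n x] by (auto simp: sgn_if)
  then have "w = \<bar>x i\<bar>" using level_vector_eq_0[OF w] by blast
  then show "v = w" using i by simp
qed

lemma level_vector_in_sign_space: "v \<in> abs_values n x \<Longrightarrow> level_vector n x v \<in> sign_space n x"
  using abs_values_pos[of v n x] by (intro sign_spaceI) (auto simp: level_vector_def Rn_def)

lemma independent_level_vectors: "fs.independent (level_vector n x ` abs_values n x)"
proof (rule fs.independent_if_scalars_zero)
  fix c w assume sum: "(\<Sum>w\<in>level_vector n x ` abs_values n x. fscale (c w) w) = 0"
    and "w \<in> level_vector n x ` abs_values n x"
  then obtain i where i: "i < n" "x i \<noteq> 0" "w = level_vector n x \<bar>x i\<bar>"
    by (auto simp: abs_values_def)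
  have "(\<Sum>v\<in>abs_values n x. c (level_vector n x v) * level_vector n x v i) = 0"
    using fun_cong[OF sum, of i]
    by (simp add: sum_fun_apply sum.reindex[OF inj_on_level_vector])
  then show "c w = 0" using i by (simp add: sum_level_vector sgn_if split: if_splits)
qed (simp add: finite_abs_values)

lemma sign_space_subset_span_level_vectors:
  "sign_space n x \<subseteq> fs.span (level_vector n x ` abs_values n x)"
proof
  fix y assume y: "y \<in> sign_space n x"
  define index where "index v = (SOME i. i < n \<and> x i \<noteq> 0 \<and> \<bar>x i\<bar> = v)" for v
  define coeff where "coeff v = y (index v) * sgn (x (index v))" for v
  have "y = (\<Sum>v\<in>abs_values n x. fscale (coeff v) (level_vector n x v))"
  proof
    fix i
    show "y i = (\<Sum>v\<in>abs_values n x. fscale (coeff v) (level_vector n x v)) i"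
    proof (cases "i < n \<and> x i \<noteq> 0")
      case True
      let ?r = "index \<bar>x i\<bar>"
      have r: "?r < n" "x ?r \<noteq> 0" "\<bar>x ?r\<bar> = \<bar>x i\<bar>"
        using someI_ex[of "\<lambda>r. r < n \<and> x r \<noteq> 0 \<and> \<bar>x r\<bar> = \<bar>x i\<bar>"] True
        unfolding index_def by blast+
      then consider "x ?r = x i" | "x ?r = - x i" by (auto simp: abs_if split: if_splits)
      then have "coeff \<bar>x i\<bar> = y i * sgn (x i)"
        using sign_space_eq[OF y r(1), of i] sign_space_neg[OF y r(1), of i] True
        by cases (auto simp: coeff_def sgn_if)
      then show ?thesis using True by (simp add: sum_fun_apply sum_level_vector sgn_if)
    next
      case False
      then have "y i = 0"
        using sign_space_neg[OF y, of i i] sign_space_Rn[OF y]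
        by (cases "i < n") (auto simp: Rn_def)
      then show ?thesis using False by (simp add: sum_fun_apply sum_level_vector)
    qed
  qed
  also have "\<dots> \<in> fs.span (level_vector n x ` abs_values n x)"
    by (intro fs.span_sum fs.span_scale fs.span_base) simp
  finally show "y \<in> fs.span (level_vector n x ` abs_values n x)" .
qed

lemma flat_dim_tight:
  assumes "x \<in> weyl n" "tight n x"
  shows "flat_dim n (vanishing_pairs n x) = card (abs_values n x)"
proof -
  have basis: "fs.span (level_vector n x ` abs_values n x) = sign_space n x"
    by (rule antisym[OF fs.span_minimal[OF _ subspace_sign_space]
          sign_space_subset_span_level_vectors]) (use level_vector_in_sign_space in blast)
  have "flat_dim n (vanishing_pairs n x) = fs.dim (fs.span (flat_of n (vanishing_pairs n x)))"
    by (simp add: flat_dim_def)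
  also have "\<dots> = fs.dim (fs.span (level_vector n x ` abs_values n x))"
    unfolding span_flat_eq_sign_space[OF assms] basis ..
  also have "\<dots> = card (level_vector n x ` abs_values n x)"
    by (rule fs.dim_span_eq_card_independent[OF independent_level_vectors])
  also have "\<dots> = card (abs_values n x)" by (rule card_image[OF inj_on_level_vector])
  finally show ?thesis .
qed

section \<open>The shape of a set of vanishing weights\<close>

text \<open>The pattern of a point whose coordinates are, in this order, \<open>u\<close> values above \<open>c\<close>,
  \<open>p\<close> values equal to \<open>c\<close>, \<open>m\<close> values in \<open>(-c, c)\<close> carrying the pattern \<open>Q\<close>, \<open>q\<close> values
  equal to \<open>-c\<close>, and values below \<open>-c\<close>.\<close>

definition outer_pattern :: "nat \<Rightarrow> nat \<Rightarrow> nat \<Rightarrow> nat \<Rightarrow> (nat \<times> nat) set \<Rightarrow> (nat \<times> nat) set" where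
  "outer_pattern u p q m Q =
     (\<lambda>(i, j). (i + u + p, j + u + p)) ` Q \<union> {u..<u + p} \<times> {u + p + m..<u + p + m + q}"

definition zero_block :: "nat \<Rightarrow> nat \<Rightarrow> (nat \<times> nat) set" where
  "zero_block a z = {(i, j). a \<le> i \<and> i \<le> j \<and> j < a + z}"

definition window :: "nat \<Rightarrow> nat \<Rightarrow> (nat \<Rightarrow> real) \<Rightarrow> (nat \<Rightarrow> real)" where
  "window s m x = (\<lambda>i. if i < m then x (i + s) else 0)"

lemma weyl_antimono: "x \<in> weyl n \<Longrightarrow> i \<le> j \<Longrightarrow> j < n \<Longrightarrow> x j \<le> x i"
  by (simp add: weyl_def)

lemma weyl_outside: "x \<in> weyl n \<Longrightarrow> n \<le> j \<Longrightarrow> x j = 0"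
  by (simp add: weyl_def Rn_def)

lemma window_weyl: "x \<in> weyl n \<Longrightarrow> s + m \<le> n \<Longrightarrow> window s m x \<in> weyl m"
  by (auto simp: weyl_def Rn_def window_def)

lemma down_closed_eq_lessThan:
  assumes "A \<subseteq> {..<n}" "\<And>i j. i \<le> j \<Longrightarrow> j \<in> A \<Longrightarrow> i \<in> A"
  shows "A = {..<card A}"
proof (cases "A = {}")
  case False
  have "finite A" using assms(1) finite_subset by blast
  then have "A = {..Max A}" using assms(2) Max_in[OF _ False] by auto
  then show ?thesis by (metis card_atMost lessThan_Suc_atMost)
qed simp

lemma weyl_less_iff_less_card:
  assumes "x \<in> weyl n" "i < n"
  shows "t < x i \<longleftrightarrow> i < card {i. i < n \<and> t < x i}"
proof -
  have "{i. i < n \<and> t < x i} = {..<card {i. i < n \<and> t < x i}}"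
    by (rule down_closed_eq_lessThan[of _ n])
      (use weyl_antimono[OF assms(1)] in \<open>auto intro: less_le_trans\<close>)
  then show ?thesis using assms(2) by (metis (no_types, lifting) lessThan_iff mem_Collect_eq)
qed

lemma weyl_le_iff_less_card:
  assumes "x \<in> weyl n" "i < n"
  shows "t \<le> x i \<longleftrightarrow> i < card {i. i < n \<and> t \<le> x i}"
proof -
  have "{i. i < n \<and> t \<le> x i} = {..<card {i. i < n \<and> t \<le> x i}}"
    by (rule down_closed_eq_lessThan[of _ n])
      (use weyl_antimono[OF assms(1)] in \<open>auto intro: order_trans\<close>)
  then show ?thesis using assms(2) by (metis (no_types, lifting) lessThan_iff mem_Collect_eq)
qed

lemma card_Collect_less_le: "card {i. i < n \<and> P i} \<le> n"
  using card_mono[of "{..<n}" "{i. i < n \<and> P i}"] by auto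

lemma vanishing_pairs_zero_block:
  assumes x: "x \<in> weyl n" and no_opposite: "\<And>i j. i < n \<Longrightarrow> j < n \<Longrightarrow> 0 < x i \<Longrightarrow> x i + x j \<noteq> 0"
  shows "\<exists>a z. a + z \<le> n \<and> vanishing_pairs n x = zero_block a z"
proof -
  define a where "a = card {i. i < n \<and> 0 < x i}"
  define b where "b = card {i. i < n \<and> 0 \<le> x i}"
  have "a \<le> b" unfolding a_def b_def by (rule card_mono) auto
  have "b \<le> n" unfolding b_def by (rule card_Collect_less_le)
  have zero_iff: "x i = 0 \<longleftrightarrow> a \<le> i \<and> i < b" if "i < n" for i
    using weyl_less_iff_less_card[OF x that, of 0] weyl_le_iff_less_card[OF x that, of 0]
    unfolding a_def b_def by linarith
  have "vanishing_pairs n x = zero_block a (b - a)"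
  proof (rule set_eqI, clarify)
    fix i j
    show "(i, j) \<in> vanishing_pairs n x \<longleftrightarrow> (i, j) \<in> zero_block a (b - a)"
    proof
      assume "(i, j) \<in> vanishing_pairs n x"
      then have ij: "i \<le> j" "j < n" and weight: "weight (i, j) x = 0"
        using vanishing_pairs_iff[OF x] by auto
      have "x i = 0 \<and> x j = 0"
      proof (cases "i = j")
        case False
        then have "x i + x j = 0" using weight by (simp add: weight_def)
        moreover have "\<not> 0 < x i" using no_opposite[of i j] \<open>x i + x j = 0\<close> ij by auto
        moreover have "x j \<le> x i" using weyl_antimono[OF x ij] .
        ultimately show ?thesis by linarith
      qed (use weight in \<open>simp add: weight_def\<close>)
      then show "(i, j) \<in> zero_block a (b - a)"
        using zero_iff[of i] zero_iff[of j] ij by (simp add: zero_block_def)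
    next
      assume "(i, j) \<in> zero_block a (b - a)"
      then have "a \<le> i" "i \<le> j" "j < b" using \<open>a \<le> b\<close> by (auto simp: zero_block_def)
      then show "(i, j) \<in> vanishing_pairs n x"
        unfolding vanishing_pairs_iff[OF x] using zero_iff[of i] zero_iff[of j] \<open>b \<le> n\<close>
        by (simp add: weight_def)
    qed
  qed
  then show ?thesis using \<open>a \<le> b\<close> \<open>b \<le> n\<close> by (intro exI[of _ a] exI[of _ "b - a"]) simp
qed

text \<open>The coordinates above \<open>c\<close> and below \<open>-c\<close> lie on no hyperplane of \<open>T\<^sub>x\<close>, except that those
  equal to \<open>c\<close> meet all those equal to \<open>-c\<close>.\<close>

locale threshold_split =
  fixes n :: nat and x :: "nat \<Rightarrow> real" and c :: real and u p m q w :: nat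
  assumes x: "x \<in> weyl n" and c: "c > 0" and size: "n = u + p + m + q + w"
    and above: "\<And>i. i < n \<Longrightarrow> c < x i \<longleftrightarrow> i < u"
    and plus: "\<And>i. i < n \<Longrightarrow> x i = c \<longleftrightarrow> u \<le> i \<and> i < u + p"
    and minus: "\<And>i. i < n \<Longrightarrow> x i = - c \<longleftrightarrow> u + p + m \<le> i \<and> i < u + p + m + q"
    and below: "\<And>i. i < n \<Longrightarrow> x i < - c \<longleftrightarrow> u + p + m + q \<le> i"
    and no_opposite: "\<And>i j. i < n \<Longrightarrow> j < n \<Longrightarrow> c < x i \<Longrightarrow> x i + x j \<noteq> 0"
begin

abbreviation "inner_point \<equiv> window (u + p) m x"

lemma inner_weyl: "inner_point \<in> weyl m"
  using window_weyl[OF x, of "u + p" m] size by simp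

lemma inner_between: "u + p \<le> i \<Longrightarrow> i < u + p + m \<Longrightarrow> - c < x i \<and> x i < c"
  using above[of i] plus[of i] minus[of i] below[of i] size by force

lemma vanishing_pairs_subset:
  "vanishing_pairs n x \<subseteq> outer_pattern u p q m (vanishing_pairs m inner_point)"
proof (clarify)
  fix i j assume "(i, j) \<in> vanishing_pairs n x"
  then have ij: "i \<le> j" "j < n" "i < n" and weight: "weight (i, j) x = 0"
    using vanishing_pairs_iff[OF x] by auto
  consider "i < u" | "u \<le> i" "i < u + p" | "u + p \<le> i" "i < u + p + m" | "u + p + m \<le> i"
    by linarith
  then show "(i, j) \<in> outer_pattern u p q m (vanishing_pairs m inner_point)"
  proof cases
    case 1
    then have "c < x i" using above ij by simp
    then show ?thesis
      using weight no_opposite[OF ij(3,2)] c by (auto simp: weight_def split: if_splits)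
  next
    case 2
    then have "x i = c" using plus ij by simp
    then have "x j = - c" using weight c by (auto simp: weight_def split: if_splits)
    then show ?thesis using 2 minus[OF ij(2)] by (auto simp: outer_pattern_def)
  next
    case 3
    have "j < u + p + m"
    proof (cases "i = j")
      case False
      then have "x j = - x i" using weight by (simp add: weight_def)
      then show ?thesis
        using minus[OF ij(2)] below[OF ij(2)] inner_between[OF 3]
        by (cases "j < u + p + m + q") auto
    qed (use 3 in simp)
    obtain i' j' where shift: "i = i' + u + p" "j = j' + u + p"
      using 3 ij by (metis add.assoc le_add_diff_inverse2 le_trans)
    then have "(i', j') \<in> vanishing_pairs m inner_point"
      unfolding vanishing_pairs_iff[OF inner_weyl] using \<open>j < u + p + m\<close> ij weight
      by (auto simp: weight_def window_def add.assoc)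
    then show ?thesis unfolding outer_pattern_def using shift by force
  next
    case 4
    then have "x i < 0" using minus[OF ij(3)] below[OF ij(3)] c
      by (cases "i < u + p + m + q") auto
    moreover have "x j \<le> x i" using weyl_antimono[OF x ij(1,2)] .
    ultimately show ?thesis using weight by (auto simp: weight_def split: if_splits)
  qed
qed

lemma outer_pattern_subset:
  "outer_pattern u p q m (vanishing_pairs m inner_point) \<subseteq> vanishing_pairs n x"
proof (clarify)
  fix i j assume "(i, j) \<in> outer_pattern u p q m (vanishing_pairs m inner_point)"
  then consider (inner) i' j'
      where "(i', j') \<in> vanishing_pairs m inner_point" "i = i' + u + p" "j = j' + u + p"
    | (rectangle) "u \<le> i" "i < u + p" "u + p + m \<le> j" "j < u + p + m + q"
    unfolding outer_pattern_def by auto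
  then show "(i, j) \<in> vanishing_pairs n x"
  proof cases
    case inner
    then have "i' \<le> j'" "j' < m" "weight (i', j') inner_point = 0"
      using vanishing_pairs_iff[OF inner_weyl] by auto
    then show ?thesis
      unfolding vanishing_pairs_iff[OF x] using inner size
      by (auto simp: weight_def window_def add.assoc)
  next
    case rectangle
    then have "x i = c" "x j = - c" using plus minus size by auto
    then show ?thesis unfolding vanishing_pairs_iff[OF x] using rectangle size
      by (auto simp: weight_def)
  qed
qed

lemma vanishing_pairs_eq:
  "vanishing_pairs n x = outer_pattern u p q m (vanishing_pairs m inner_point)"
  using vanishing_pairs_subset outer_pattern_subset by blast

end

text \<open>The threshold \<open>c\<close> is the largest positive value whose negative also occurs.\<close>

lemma vanishing_pairs_outer_case:
  assumes x: "x \<in> weyl n" and "i0 < n" "j0 < n" "0 < x i0" "x i0 + x j0 = 0"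
  shows "\<exists>u p q m w. 1 \<le> p \<and> 1 \<le> q \<and> n = u + p + m + q + w \<and>
    vanishing_pairs n x = outer_pattern u p q m (vanishing_pairs m (window (u + p) m x))"
proof -
  define C where "C = {x i | i. i < n \<and> 0 < x i \<and> (\<exists>j<n. x i + x j = 0)}"
  have "finite C" unfolding C_def by (rule finite_subset[of _ "x ` {..<n}"]) auto
  define c where "c = Max C"
  have "C \<noteq> {}" using assms unfolding C_def by blast
  then have "c \<in> C" unfolding c_def using \<open>finite C\<close> by simp
  then obtain i1 j1 where i1: "i1 < n" "x i1 = c" "0 < c" and j1: "j1 < n" "x j1 = - c"
    unfolding C_def by (auto simp: eq_neg_iff_add_eq_0 add.commute)
  have c_max: "x i \<le> c" if "i < n" "0 < x i" "j < n" "x i + x j = 0" for i j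
    unfolding c_def using \<open>finite C\<close> that unfolding C_def by (intro Max_ge) auto
  define u where "u = card {i. i < n \<and> c < x i}"
  define up where "up = card {i. i < n \<and> c \<le> x i}"
  define upm where "upm = card {i. i < n \<and> - c < x i}"
  define upmq where "upmq = card {i. i < n \<and> - c \<le> x i}"
  have "u \<le> up" "up \<le> upm" "upm \<le> upmq" "upmq \<le> n"
    unfolding u_def up_def upm_def upmq_def using \<open>0 < c\<close>
    by (auto intro!: card_mono card_Collect_less_le)
  then obtain p m q w where sums: "up = u + p" "upm = u + p + m" "upmq = u + p + m + q"
    "n = u + p + m + q + w"
    by (metis le_add_diff_inverse)
  note thresholds = weyl_less_iff_less_card[OF x] weyl_le_iff_less_card[OF x]
  have "1 \<le> p" using thresholds[OF i1(1), of c] i1 sums unfolding u_def up_def by auto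
  have "1 \<le> q"
    using thresholds[OF j1(1), of "- c"] j1 \<open>0 < c\<close> sums unfolding upm_def upmq_def by auto
  interpret threshold_split n x c u p m q w
  proof
    fix i assume i: "i < n"
    note t = thresholds[OF i, of c] thresholds[OF i, of "- c"]
    show "c < x i \<longleftrightarrow> i < u" using t unfolding u_def by simp
    show "x i = c \<longleftrightarrow> u \<le> i \<and> i < u + p" using t sums unfolding u_def up_def by auto
    show "x i = - c \<longleftrightarrow> u + p + m \<le> i \<and> i < u + p + m + q"
      using t sums unfolding upm_def upmq_def by auto
    show "x i < - c \<longleftrightarrow> u + p + m + q \<le> i" using t sums unfolding upmq_def by auto
  next
    fix i j assume "i < n" "j < n" "c < x i"
    then show "x i + x j \<noteq> 0" using c_max[of i j] \<open>0 < c\<close> by auto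
  qed (use x \<open>0 < c\<close> sums in auto)
  show ?thesis using \<open>1 \<le> p\<close> \<open>1 \<le> q\<close> vanishing_pairs_eq sums(4) by blast
qed

lemma vanishing_pairs_cases:
  assumes x: "x \<in> weyl n"
  obtains (zero_block) a z where "a + z \<le> n" "vanishing_pairs n x = zero_block a z"
  | (outer) u p q m w where "1 \<le> p" "1 \<le> q" "n = u + p + m + q + w"
      "vanishing_pairs n x = outer_pattern u p q m (vanishing_pairs m (window (u + p) m x))"
proof (cases "\<exists>i<n. \<exists>j<n. 0 < x i \<and> x i + x j = 0")
  case False
  then show ?thesis using vanishing_pairs_zero_block[OF x] zero_block by blast
next
  case True
  then show ?thesis using vanishing_pairs_outer_case[OF x] outer by blast
qed

section \<open>Tight points realizing the patterns\<close>

definition zero_block_point :: "nat \<Rightarrow> nat \<Rightarrow> nat \<Rightarrow> nat \<Rightarrow> real" where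
  "zero_block_point n a z = (\<lambda>i. if i < a then real (2 * n + 2 - i) else if i < a + z then 0
     else if i < n then - real (i + 1) else 0)"

lemma zero_block_point_weyl: "a + z \<le> n \<Longrightarrow> zero_block_point n a z \<in> weyl n"
  by (auto simp: weyl_def Rn_def zero_block_point_def)

lemma vanishing_pairs_zero_block_point:
  assumes "a + z \<le> n"
  shows "vanishing_pairs n (zero_block_point n a z) = zero_block a z"
proof (rule set_eqI, clarify)
  fix i j
  show "(i, j) \<in> vanishing_pairs n (zero_block_point n a z) \<longleftrightarrow> (i, j) \<in> zero_block a z"
    unfolding vanishing_pairs_iff[OF zero_block_point_weyl[OF assms]] using assms
    by (auto simp: weight_def zero_block_point_def zero_block_def split: if_splits)
qed

lemma tight_zero_block_point: "a + z \<le> n \<Longrightarrow> tight n (zero_block_point n a z)"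
  by (auto simp: tight_def zero_block_point_def split: if_splits)

lemma card_abs_values_zero_block_point:
  assumes "a + z \<le> n"
  shows "card (abs_values n (zero_block_point n a z)) = n - z"
proof -
  let ?x = "zero_block_point n a z"
  let ?I = "{..<a} \<union> {a + z..<n}"
  have nonzero: "?x i \<noteq> 0 \<longleftrightarrow> i \<in> ?I" if "i < n" for i
    using that by (simp add: zero_block_point_def)
  have "abs_values n ?x = (\<lambda>i. \<bar>?x i\<bar>) ` ?I"
  proof
    show "abs_values n ?x \<subseteq> (\<lambda>i. \<bar>?x i\<bar>) ` ?I"
      using nonzero by (auto simp: abs_values_def)
    show "(\<lambda>i. \<bar>?x i\<bar>) ` ?I \<subseteq> abs_values n ?x"
    proof
      fix v assume "v \<in> (\<lambda>i. \<bar>?x i\<bar>) ` ?I"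
      then obtain i where i: "i \<in> ?I" "v = \<bar>?x i\<bar>" by blast
      then have "i < n" using assms by auto
      then show "v \<in> abs_values n ?x" using i nonzero unfolding abs_values_def by blast
    qed
  qed
  moreover have "inj_on (\<lambda>i. \<bar>?x i\<bar>) ?I"
  proof
    fix i j assume i: "i \<in> ?I" and j: "j \<in> ?I" and eq: "\<bar>?x i\<bar> = \<bar>?x j\<bar>"
    have "\<bar>?x k\<bar> = (if k < a then real (2 * n + 2 - k) else real (k + 1))" if "k \<in> ?I" for k
      using that assms by (auto simp: zero_block_point_def)
    moreover have "i < n" "j < n" using i j assms by auto
    ultimately show "i = j" using eq i j by (auto split: if_splits)
  qed
  moreover have "card ?I = n - z" using assms by (subst card_Un_disjoint) auto
  ultimately show ?thesis by (simp add: card_image)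
qed

text \<open>Around an inner point with values in \<open>(-1, 1)\<close> the outer coordinates get the values
  \<open>\<plusminus>2\<close> and otherwise pairwise distinct integer absolute values \<open>\<ge> 3\<close>.\<close>

definition outer_point :: "nat \<Rightarrow> nat \<Rightarrow> nat \<Rightarrow> nat \<Rightarrow> nat \<Rightarrow> (nat \<Rightarrow> real) \<Rightarrow> nat \<Rightarrow> real" where
  "outer_point u p q w m y = (\<lambda>i. if i < u then real (w + 4 + u - i) else if i < u + p then 2
     else if i < u + p + m then y (i - (u + p)) else if i < u + p + m + q then -2
     else if i < u + p + m + q + w then - real (i - (u + p + m + q) + 3) else 0)"

locale outer_point_data =
  fixes u p q w m n :: nat and y :: "nat \<Rightarrow> real"
  assumes y: "y \<in> weyl m" and y_gt: "\<And>i. - 1 < y i" and y_lt: "\<And>i. y i < 1"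
    and p: "1 \<le> p" and q: "1 \<le> q" and size: "n = u + p + m + q + w"
begin

abbreviation "x \<equiv> outer_point u p q w m y"

lemma outer_point_weyl: "x \<in> weyl n"
  unfolding weyl_def Rn_def
proof (intro CollectI conjI allI impI)
  fix i assume "n \<le> i" then show "x i = 0" using size by (simp add: outer_point_def)
next
  fix i j assume "i \<le> j \<and> j < n"
  then show "x j \<le> x i"
    using size weyl_antimono[OF y, of "i - (u + p)" "j - (u + p)"] y_gt[of "i - (u + p)"]
      y_lt[of "i - (u + p)"] y_gt[of "j - (u + p)"] y_lt[of "j - (u + p)"]
    by (simp add: outer_point_def) linarith
qed

lemma vanishing_pairs_outer_point:
  "vanishing_pairs n x = outer_pattern u p q m (vanishing_pairs m y)"
proof -
  have window: "window (u + p) m x = y"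
    using weyl_outside[OF y] by (auto simp: window_def outer_point_def)
  have "threshold_split n x 2 u p m q w"
  proof (unfold_locales)
    fix i assume i: "i < n"
    note bounds = y_gt[of "i - (u + p)"] y_lt[of "i - (u + p)"]
    show "2 < x i \<longleftrightarrow> i < u" using i size bounds by (simp add: outer_point_def)
    show "x i = 2 \<longleftrightarrow> u \<le> i \<and> i < u + p" using i size bounds by (simp add: outer_point_def)
    show "x i = - 2 \<longleftrightarrow> u + p + m \<le> i \<and> i < u + p + m + q" using i size bounds
      by (simp add: outer_point_def)
    show "x i < - 2 \<longleftrightarrow> u + p + m + q \<le> i" using i size bounds by (simp add: outer_point_def)
  next
    fix i j assume ij: "i < n" "j < n" "2 < x i"
    then have "i < u" using size y_lt[of "i - (u + p)"]
      by (simp add: outer_point_def split: if_splits)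
    moreover have "x j > - real (w + 4 + u - i)"
      using ij(2) size y_gt[of "j - (u + p)"] \<open>i < u\<close> by (simp add: outer_point_def)
    ultimately show "x i + x j \<noteq> 0" by (simp add: outer_point_def)
  qed (use outer_point_weyl size in simp_all)
  then show ?thesis using threshold_split.vanishing_pairs_eq window by metis
qed

lemma tight_outer_point:
  assumes "tight m y"
  shows "tight n x"
  unfolding tight_def
proof (intro allI impI)
  fix i j assume i: "i < n" and j: "j < n" and eq: "x i = x j"
  note bounds = y_gt[of "i - (u + p)"] y_lt[of "i - (u + p)"]
    y_gt[of "j - (u + p)"] y_lt[of "j - (u + p)"]
  consider "i < u" | "u \<le> i" "i < u + p" | "u + p \<le> i" "i < u + p + m"
    | "u + p + m \<le> i" "i < u + p + m + q" | "u + p + m + q \<le> i" by linarith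
  then show "i = j \<or> x i = 0 \<or> (\<exists>l<n. x l = - x i)"
  proof cases
    case 1
    then have "j < u" using eq j size bounds by (simp add: outer_point_def split: if_splits)
    then show ?thesis using eq 1 by (simp add: outer_point_def)
  next
    case 2
    then have "x (u + p + m) = - x i" "u + p + m < n" using q size
      by (simp_all add: outer_point_def)
    then show ?thesis by blast
  next
    case 3
    then have xi: "x i = y (i - (u + p))" by (simp add: outer_point_def)
    have j3: "u + p \<le> j" "j < u + p + m"
      using eq i j size bounds 3 by (simp_all add: outer_point_def split: if_splits)
    then have "x j = y (j - (u + p))" by (simp add: outer_point_def)
    then consider "i - (u + p) = j - (u + p)" | "y (i - (u + p)) = 0"
      | l where "l < m" "y l = - y (i - (u + p))"
      using \<open>tight m y\<close> eq xi 3 j3 unfolding tight_def by (metis less_diff_conv2 add.commute)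
    then show ?thesis
    proof cases
      case 1 then show ?thesis using 3 j3 by linarith
    next
      case (3 l)
      then have "x (l + (u + p)) = - x i" "l + (u + p) < n" using xi size
        by (simp_all add: outer_point_def)
      then show ?thesis by blast
    qed (use xi in simp)
  next
    case 4
    then have "x u = - x i" "u < n" using p size by (simp_all add: outer_point_def)
    then show ?thesis by blast
  next
    case 5
    then have "u + p + m + q \<le> j" using eq j i size bounds
      by (simp add: outer_point_def split: if_splits)
    then show ?thesis using eq 5 i j size by (simp add: outer_point_def)
  qed
qed

lemma abs_values_outer_point:
  "abs_values n x = real ` ({w + 5..<w + 5 + u} \<union> {2} \<union> {3..<w + 3}) \<union> abs_values m y"
  (is "_ = real ` ?K \<union> _")
proof
  show "abs_values n x \<subseteq> real ` ?K \<union> abs_values m y"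
  proof
    fix v assume "v \<in> abs_values n x"
    then obtain i where i: "i < n" "x i \<noteq> 0" "v = \<bar>x i\<bar>" by (auto simp: abs_values_def)
    consider "i < u" | "u \<le> i" "i < u + p" | "u + p \<le> i" "i < u + p + m"
      | "u + p + m \<le> i" "i < u + p + m + q" | "u + p + m + q \<le> i" by linarith
    then show "v \<in> real ` ?K \<union> abs_values m y"
    proof cases
      case 1
      then have "v = real (w + 4 + u - i)" "w + 4 + u - i \<in> ?K" using i
        by (auto simp: outer_point_def)
      then show ?thesis by blast
    next
      case 3
      then have "v = \<bar>y (i - (u + p))\<bar>" "y (i - (u + p)) \<noteq> 0" "i - (u + p) < m"
        using i by (auto simp: outer_point_def)
      then show ?thesis unfolding abs_values_def by blast
    next
      case 5
      then have "v = real (i - (u + p + m + q) + 3)" "i - (u + p + m + q) + 3 \<in> ?K"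
        using i size by (auto simp: outer_point_def)
      then show ?thesis by blast
    qed (use i in \<open>force simp: outer_point_def\<close>)+
  qed
  have outer_value: "real k \<in> abs_values n x" if k: "k \<in> ?K" for k
  proof -
    consider "k \<in> {w + 5..<w + 5 + u}" | "k = 2" | "k \<in> {3..<w + 3}" using k by auto
    then obtain i where "i < n" "\<bar>x i\<bar> = real k" "k \<noteq> 0"
    proof cases
      case 1
      then show ?thesis using size by (intro that[of "w + 4 + u - k"]) (auto simp: outer_point_def)
    next
      case 2
      then show ?thesis using size p by (intro that[of u]) (auto simp: outer_point_def)
    next
      case 3
      then show ?thesis using size
        by (intro that[of "u + p + m + q + (k - 3)"]) (auto simp: outer_point_def)
    qed
    then show ?thesis unfolding abs_values_def by force
  qed
  have inner_value: "v \<in> abs_values n x" if v: "v \<in> abs_values m y" for v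
  proof -
    obtain i where i: "i < m" "y i \<noteq> 0" "v = \<bar>y i\<bar>" using v by (auto simp: abs_values_def)
    then have "i + (u + p) < n" "x (i + (u + p)) = y i" using size by (auto simp: outer_point_def)
    then show ?thesis using i unfolding abs_values_def by force
  qed
  show "real ` ?K \<union> abs_values m y \<subseteq> abs_values n x"
    using outer_value inner_value by blast
qed

lemma card_abs_values_outer_point: "card (abs_values n x) = card (abs_values m y) + u + w + 1"
proof -
  let ?K = "{w + 5..<w + 5 + u} \<union> {2} \<union> {3..<w + 3}"
  have "real ` ?K \<inter> abs_values m y = {}"
  proof -
    have "v < 1" if "v \<in> abs_values m y" for v using that y_gt y_lt
      by (auto simp: abs_values_def abs_if)
    moreover have "v \<ge> 2" if "v \<in> real ` ?K" for v using that by auto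
    ultimately show ?thesis by force
  qed
  then have "card (abs_values n x) = card (real ` ?K) + card (abs_values m y)"
    unfolding abs_values_outer_point using finite_abs_values[of m y]
    by (intro card_Un_disjoint) auto
  also have "card (real ` ?K) = card ?K" by (rule card_image) (simp add: inj_on_def)
  also have "card ?K = u + 1 + w" by (subst card_Un_disjoint, auto)+
  finally show ?thesis by simp
qed

end

lemma weyl_fscale: "x \<in> weyl n \<Longrightarrow> c > 0 \<Longrightarrow> fscale c x \<in> weyl n"
  by (auto simp: weyl_def Rn_def intro: mult_left_mono)

lemma vanishing_pairs_fscale:
  "x \<in> weyl n \<Longrightarrow> c > 0 \<Longrightarrow> vanishing_pairs n (fscale c x) = vanishing_pairs n x"
  by (auto simp: vanishing_pairs_iff weyl_fscale weight_fscale)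

lemma tight_fscale: "tight n x \<Longrightarrow> c > 0 \<Longrightarrow> tight n (fscale c x)"
  unfolding tight_def
  by (metis fscale_apply mult_cancel_left mult_minus_right mult_zero_right order_less_irrefl)

lemma card_abs_values_fscale: "c > 0 \<Longrightarrow> card (abs_values n (fscale c x)) = card (abs_values n x)"
proof -
  assume "c > 0"
  then have "abs_values n (fscale c x) = (\<lambda>v. c * v) ` abs_values n x"
    by (auto simp: abs_values_def abs_mult image_iff)
  moreover have "inj_on (\<lambda>v. c * v) (abs_values n x)" using \<open>c > 0\<close> by (auto simp: inj_on_def)
  ultimately show ?thesis by (simp add: card_image)
qed

text \<open>The inner point is rescaled into \<open>(-1, 1)\<close> and then embedded by \<open>outer_point\<close>.\<close>

lemma outer_pattern_realizable:
  assumes x: "x \<in> weyl m" and "1 \<le> p" "1 \<le> q" "n = u + p + m + q + w"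
  obtains z where "z \<in> weyl n" "vanishing_pairs n z = outer_pattern u p q m (vanishing_pairs m x)"
    "tight m x \<Longrightarrow> tight n z \<and> card (abs_values n z) = card (abs_values m x) + u + w + 1"
proof -
  define K where "K = 1 + (\<Sum>i<m. \<bar>x i\<bar>)"
  have "K \<ge> 1" unfolding K_def by (simp add: sum_nonneg)
  have bound: "\<bar>x i\<bar> < K" for i
  proof (cases "i < m")
    case True
    then have "\<bar>x i\<bar> \<le> (\<Sum>i<m. \<bar>x i\<bar>)" by (intro member_le_sum) auto
    then show ?thesis unfolding K_def by simp
  next
    case False then show ?thesis using weyl_outside[OF x, of i] \<open>K \<ge> 1\<close> by simp
  qed
  define y where "y = fscale (1 / K) x"
  have "1 / K > 0" using \<open>K \<ge> 1\<close> by simp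
  have "- 1 < y i" "y i < 1" for i
    using bound[of i] \<open>K \<ge> 1\<close> by (auto simp: y_def abs_less_iff field_simps)
  then interpret outer_point_data u p q w m n y
    using weyl_fscale[OF x \<open>1 / K > 0\<close>] assms by unfold_locales (auto simp: y_def)
  show ?thesis
  proof (rule that[OF outer_point_weyl])
    show "vanishing_pairs n (outer_point u p q w m y) = outer_pattern u p q m (vanishing_pairs m x)"
      using vanishing_pairs_outer_point vanishing_pairs_fscale[OF x \<open>1 / K > 0\<close>]
      by (simp add: y_def)
    show "tight n (outer_point u p q w m y) \<and>
        card (abs_values n (outer_point u p q w m y)) = card (abs_values m x) + u + w + 1"
      if "tight m x"
      using tight_outer_point tight_fscale[OF that \<open>1 / K > 0\<close>] card_abs_values_outer_point
        card_abs_values_fscale[OF \<open>1 / K > 0\<close>] by (simp add: y_def)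
  qed
qed

lemma exists_tight_point:
  "x \<in> weyl n \<Longrightarrow> \<exists>y \<in> weyl n. tight n y \<and> vanishing_pairs n y = vanishing_pairs n x"
proof (induction n arbitrary: x rule: less_induct)
  case (less n)
  from less.prems show ?case
  proof (cases rule: vanishing_pairs_cases)
    case (zero_block a z)
    then show ?thesis
      using zero_block_point_weyl tight_zero_block_point vanishing_pairs_zero_block_point by metis
  next
    case (outer u p q m w)
    have "window (u + p) m x \<in> weyl m" using window_weyl[OF less.prems, of "u + p" m] outer(3)
      by simp
    moreover have "m < n" using outer by simp
    ultimately obtain y where y: "y \<in> weyl m" "tight m y"
      "vanishing_pairs m y = vanishing_pairs m (window (u + p) m x)"
      using less.IH by blast
    obtain z where "z \<in> weyl n" "vanishing_pairs n z = outer_pattern u p q m (vanishing_pairs m y)"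
      "tight n z"
      using outer_pattern_realizable[OF y(1) outer(1-3)] y(2) by metis
    then show ?thesis using outer(4) y(3) by metis
  qed
qed

lemma flat_dim_zero_block: "a + z \<le> n \<Longrightarrow> flat_dim n (zero_block a z) = n - z"
  using flat_dim_tight[OF zero_block_point_weyl tight_zero_block_point]
    vanishing_pairs_zero_block_point card_abs_values_zero_block_point by metis

lemma flat_dim_outer_pattern:
  assumes "Q \<in> realizable m" and "1 \<le> p" "1 \<le> q" "n = u + p + m + q + w"
  shows "flat_dim n (outer_pattern u p q m Q) = flat_dim m Q + u + w + 1"
proof -
  obtain x0 where "x0 \<in> weyl m" "Q = vanishing_pairs m x0"
    using assms(1) by (auto simp: realizable_def)
  then obtain x where x: "x \<in> weyl m" "tight m x" "vanishing_pairs m x = Q"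
    using exists_tight_point by metis
  obtain z where "z \<in> weyl n" "vanishing_pairs n z = outer_pattern u p q m Q" "tight n z"
    "card (abs_values n z) = card (abs_values m x) + u + w + 1"
    using outer_pattern_realizable[OF x(1) assms(2-4)] x(2,3) by metis
  then show ?thesis using flat_dim_tight x by metis
qed

section \<open>The recursion for \<open>h\<close>\<close>

lemma outer_pattern_fst_ge: "(i, j) \<in> outer_pattern u p q m Q \<Longrightarrow> u \<le> i"
  by (auto simp: outer_pattern_def)

lemma outer_pattern_row:
  "1 \<le> p \<Longrightarrow> (u, j) \<in> outer_pattern u p q m Q \<longleftrightarrow> u + p + m \<le> j \<and> j < u + p + m + q"
  by (auto simp: outer_pattern_def)

lemma outer_pattern_last_column:
  "Q \<subseteq> wpairs m \<Longrightarrow> 1 \<le> q \<Longrightarrow>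
    (i, u + p + m + q - 1) \<in> outer_pattern u p q m Q \<longleftrightarrow> u \<le> i \<and> i < u + p"
  by (auto simp: outer_pattern_def wpairs_def)

lemma outer_pattern_shift_iff:
  "Q \<subseteq> wpairs m \<Longrightarrow> (i + u + p, j + u + p) \<in> outer_pattern u p q m Q \<and> j < m \<longleftrightarrow> (i, j) \<in> Q"
  by (auto simp: outer_pattern_def wpairs_def)

text \<open>Row \<open>u\<close> of an outer pattern recovers the block of coordinates equal to \<open>-c\<close>, and its last
  column the block of coordinates equal to \<open>c\<close>.\<close>

lemma outer_pattern_inject:
  assumes eq: "outer_pattern u1 p1 q1 m1 Q1 = outer_pattern u2 p2 q2 m2 Q2"
    and "Q1 \<subseteq> wpairs m1" "Q2 \<subseteq> wpairs m2" and "1 \<le> p1" "1 \<le> q1" "1 \<le> p2" "1 \<le> q2"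
  shows "u1 = u2 \<and> p1 = p2 \<and> q1 = q2 \<and> m1 = m2 \<and> Q1 = Q2"
proof -
  have "(u1, u1 + p1 + m1) \<in> outer_pattern u1 p1 q1 m1 Q1"
    "(u2, u2 + p2 + m2) \<in> outer_pattern u2 p2 q2 m2 Q2"
    using outer_pattern_row[OF \<open>1 \<le> p1\<close>] outer_pattern_row[OF \<open>1 \<le> p2\<close>] assms(5,7) by auto
  then have u: "u1 = u2" using eq outer_pattern_fst_ge by (metis le_antisym)
  have "(u1, j) \<in> outer_pattern u1 p1 q1 m1 Q1 \<longleftrightarrow> j \<in> {u1 + p1 + m1..<u1 + p1 + m1 + q1}"
    "(u1, j) \<in> outer_pattern u2 p2 q2 m2 Q2 \<longleftrightarrow> j \<in> {u1 + p2 + m2..<u1 + p2 + m2 + q2}" for j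
    using outer_pattern_row[OF \<open>1 \<le> p1\<close>] outer_pattern_row[OF \<open>1 \<le> p2\<close>] u by simp_all
  then have columns: "{u1 + p1 + m1..<u1 + p1 + m1 + q1} = {u1 + p2 + m2..<u1 + p2 + m2 + q2}"
    using eq by blast
  have pm: "u1 + p1 + m1 = u1 + p2 + m2" and "u1 + p1 + m1 + q1 = u1 + p2 + m2 + q2"
    using atLeastLessThan_inj[OF columns] assms(5,7) by auto
  then have q: "q1 = q2" by simp
  have last: "u1 + p1 + m1 + q1 - 1 = u2 + p2 + m2 + q2 - 1" using u pm q by simp
  have "(i, u1 + p1 + m1 + q1 - 1) \<in> outer_pattern u1 p1 q1 m1 Q1 \<longleftrightarrow> i \<in> {u1..<u1 + p1}" for i
    using outer_pattern_last_column[OF assms(2) \<open>1 \<le> q1\<close>, of i u1 p1] by simp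
  moreover have
    "(i, u1 + p1 + m1 + q1 - 1) \<in> outer_pattern u2 p2 q2 m2 Q2 \<longleftrightarrow> i \<in> {u1..<u1 + p2}" for i
    unfolding last using outer_pattern_last_column[OF assms(3) \<open>1 \<le> q2\<close>, of i u2 p2] u by simp
  ultimately have rows: "{u1..<u1 + p1} = {u1..<u1 + p2}"
    using eq by blast
  have p: "p1 = p2" using atLeastLessThan_inj(2)[OF rows] assms(4,6) by auto
  then have m: "m1 = m2" using pm by simp
  have "Q1 = Q2"
  proof (rule set_eqI, clarify)
    fix i j
    show "(i, j) \<in> Q1 \<longleftrightarrow> (i, j) \<in> Q2"
      using outer_pattern_shift_iff[OF assms(2)] outer_pattern_shift_iff[OF assms(3)] eq u p m
      by metis
  qed
  then show ?thesis using u p q m by simp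
qed

lemma outer_pattern_neq_zero_block:
  assumes "1 \<le> p" "1 \<le> q"
  shows "outer_pattern u p q m Q \<noteq> zero_block a z"
proof
  assume eq: "outer_pattern u p q m Q = zero_block a z"
  have "(u, u + p + m) \<in> zero_block a z"
    using outer_pattern_row[OF \<open>1 \<le> p\<close>, where u = u and m = m and q = q and Q = Q] \<open>1 \<le> q\<close> eq
    by simp
  then have "(u, u) \<in> outer_pattern u p q m Q" unfolding eq by (auto simp: zero_block_def)
  then show False using outer_pattern_row[OF \<open>1 \<le> p\<close>, of u u q m Q] \<open>1 \<le> p\<close> by simp
qed

definition zero_blocks :: "nat \<Rightarrow> (nat \<times> nat) set set" where
  "zero_blocks n = {zero_block a z | a z. a + z \<le> n}"

text \<open>A tuple \<open>(u, p, q, w)\<close> describes an outer pattern on \<open>n\<close> coordinates with inner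
  chamber of size \<open>n - (u + p + q + w)\<close>; it raises the dimension by \<open>u + w + 1\<close>.\<close>

definition outer_params :: "nat \<Rightarrow> (nat \<times> nat \<times> nat \<times> nat) set" where
  "outer_params n = {(u, p, q, w). 1 \<le> p \<and> 1 \<le> q \<and> u + p + q + w \<le> n}"

fun inner_size :: "nat \<Rightarrow> nat \<times> nat \<times> nat \<times> nat \<Rightarrow> nat" where
  "inner_size n (u, p, q, w) = n - (u + p + q + w)"

fun outer_of :: "nat \<Rightarrow> nat \<times> nat \<times> nat \<times> nat \<Rightarrow> (nat \<times> nat) set \<Rightarrow> (nat \<times> nat) set" where
  "outer_of n (u, p, q, w) = outer_pattern u p q (n - (u + p + q + w))"

fun dim_gain :: "nat \<times> nat \<times> nat \<times> nat \<Rightarrow> nat" where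
  "dim_gain (u, p, q, w) = u + w + 1"

lemma finite_outer_params: "finite (outer_params n)"
  by (rule finite_subset[of _ "{..n} \<times> {..n} \<times> {..n} \<times> {..n}"]) (auto simp: outer_params_def)

lemma zero_blocks_subset_realizable: "zero_blocks n \<subseteq> realizable n"
  using zero_block_point_weyl vanishing_pairs_zero_block_point
  by (fastforce simp: zero_blocks_def realizable_def)

lemma outer_of_realizable:
  assumes "t \<in> outer_params n" "Q \<in> realizable (inner_size n t)"
  shows "outer_of n t Q \<in> realizable n"
proof -
  obtain u p q w where t: "t = (u, p, q, w)" by (cases t)
  obtain x where "x \<in> weyl (inner_size n t)" "Q = vanishing_pairs (inner_size n t) x"
    using assms(2) by (auto simp: realizable_def)
  moreover have "1 \<le> p" "1 \<le> q" "n = u + p + inner_size n t + q + w"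
    using assms(1) by (auto simp: outer_params_def t)
  ultimately obtain z where "z \<in> weyl n" "vanishing_pairs n z = outer_of n t Q"
    by (metis outer_pattern_realizable outer_of.simps inner_size.simps t)
  then show ?thesis by (auto simp: realizable_def)
qed

lemma realizable_decomposition:
  "realizable n = zero_blocks n \<union> (\<Union>t\<in>outer_params n. outer_of n t ` realizable (inner_size n t))"
  (is "_ = _ \<union> ?outer")
proof
  show "realizable n \<subseteq> zero_blocks n \<union> ?outer"
  proof
    fix Q assume "Q \<in> realizable n"
    then obtain x where x: "x \<in> weyl n" and Q: "Q = vanishing_pairs n x"
      by (auto simp: realizable_def)
    from x show "Q \<in> zero_blocks n \<union> ?outer"
    proof (cases rule: vanishing_pairs_cases)
      case (zero_block a z)
      then show ?thesis using Q by (auto simp: zero_blocks_def)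
    next
      case (outer u p q m w)
      let ?t = "(u, p, q, w)"
      have "?t \<in> outer_params n" "inner_size n ?t = m" using outer by (auto simp: outer_params_def)
      moreover have "vanishing_pairs m (window (u + p) m x) \<in> realizable m"
        using window_weyl[OF x, of "u + p" m] outer(3) by (simp add: realizable_def)
      ultimately show ?thesis using outer Q by force
    qed
  qed
  show "zero_blocks n \<union> ?outer \<subseteq> realizable n"
    using zero_blocks_subset_realizable outer_of_realizable by blast
qed

lemma zero_block_0: "zero_block a 0 = {}"
  by (auto simp: zero_block_def)

lemma zero_block_inject: "zero_block a z = zero_block a' z \<Longrightarrow> 1 \<le> z \<Longrightarrow> a = a'"
proof -
  assume eq: "zero_block a z = zero_block a' z" and "1 \<le> z"
  then have "(a, a) \<in> zero_block a' z" "(a', a') \<in> zero_block a z"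
    by (auto simp: zero_block_def)
  then show "a = a'" by (auto simp: zero_block_def)
qed

definition zero_block_count :: "nat \<Rightarrow> nat \<Rightarrow> nat" where
  "zero_block_count n k = (if k = n then 1 else if k < n then k + 1 else 0)"

lemma card_zero_blocks_dim: "card {Q \<in> zero_blocks n. flat_dim n Q = k} = zero_block_count n k"
proof -
  have blocks: "{Q \<in> zero_blocks n. flat_dim n Q = k} =
      (\<lambda>a. zero_block a (n - k)) ` {a. a + (n - k) \<le> n \<and> k \<le> n}"
    by (auto simp: zero_blocks_def flat_dim_zero_block image_iff)
  show ?thesis
  proof (cases "k < n")
    case True
    have "{a. a + (n - k) \<le> n \<and> k \<le> n} = {..k}" using True by auto
    moreover have "inj_on (\<lambda>a. zero_block a (n - k)) {..k}"
      using zero_block_inject True by (intro inj_onI) simp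
    ultimately show ?thesis unfolding blocks using True
      by (simp add: card_image zero_block_count_def)
  next
    case False
    then show ?thesis unfolding blocks
      by (auto simp: zero_block_0 image_constant_conv zero_block_count_def)
  qed
qed

lemma flat_dim_outer_of:
  assumes "t \<in> outer_params n" "Q \<in> realizable (inner_size n t)"
  shows "flat_dim n (outer_of n t Q) = flat_dim (inner_size n t) Q + dim_gain t"
proof -
  obtain u p q w where t: "t = (u, p, q, w)" by (cases t)
  then have "1 \<le> p" "1 \<le> q" "n = u + p + inner_size n t + q + w"
    using assms(1) by (auto simp: outer_params_def)
  from flat_dim_outer_pattern[OF assms(2) this] show ?thesis by (simp add: t)
qed

lemma outer_of_inject:
  assumes "t1 \<in> outer_params n" "t2 \<in> outer_params n"
    and "Q1 \<in> realizable (inner_size n t1)" "Q2 \<in> realizable (inner_size n t2)"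
    and "outer_of n t1 Q1 = outer_of n t2 Q2"
  shows "t1 = t2 \<and> Q1 = Q2"
proof -
  obtain u1 p1 q1 w1 u2 p2 q2 w2 where t: "t1 = (u1, p1, q1, w1)" "t2 = (u2, p2, q2, w2)"
    by (cases t1, cases t2)
  have "u1 = u2 \<and> p1 = p2 \<and> q1 = q2 \<and> inner_size n t1 = inner_size n t2 \<and> Q1 = Q2"
    using outer_pattern_inject[of u1 p1 q1 "inner_size n t1" Q1 u2 p2 q2 "inner_size n t2" Q2]
      assms realizable_subset_wpairs by (auto simp: t outer_params_def)
  moreover have "u1 + p1 + q1 + w1 \<le> n" "u2 + p2 + q2 + w2 \<le> n"
    using assms(1,2) by (auto simp: t outer_params_def)
  ultimately show ?thesis by (auto simp: t)
qed

lemma outer_of_neq_zero_block: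
  "t \<in> outer_params n \<Longrightarrow> outer_of n t Q \<noteq> zero_block a z"
  by (cases t) (auto simp: outer_params_def outer_pattern_neq_zero_block)

lemma card_realizable_dim_add:
  "card {Q \<in> realizable m. flat_dim m Q + b = k} = (if b \<le> k then h m (k - b) else 0)"
proof (cases "b \<le> k")
  case True
  then have "{Q \<in> realizable m. flat_dim m Q + b = k} = {Q \<in> realizable m. flat_dim m Q = k - b}"
    by auto
  then show ?thesis using True h_eq_card_realizable by simp
qed auto

definition outer_slice :: "nat \<Rightarrow> nat \<Rightarrow> nat \<times> nat \<times> nat \<times> nat \<Rightarrow> (nat \<times> nat) set set" where
  "outer_slice n k t = outer_of n t ` {Q \<in> realizable (inner_size n t).
     flat_dim (inner_size n t) Q + dim_gain t = k}"

lemma realizable_dim_decomposition: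
  "{Q \<in> realizable n. flat_dim n Q = k} =
    {Q \<in> zero_blocks n. flat_dim n Q = k} \<union> (\<Union>t\<in>outer_params n. outer_slice n k t)"
proof
  show "{Q \<in> realizable n. flat_dim n Q = k} \<subseteq>
      {Q \<in> zero_blocks n. flat_dim n Q = k} \<union> (\<Union>t\<in>outer_params n. outer_slice n k t)"
    using flat_dim_outer_of by (subst realizable_decomposition) (fastforce simp: outer_slice_def)
  show "{Q \<in> zero_blocks n. flat_dim n Q = k} \<union> (\<Union>t\<in>outer_params n. outer_slice n k t) \<subseteq>
      {Q \<in> realizable n. flat_dim n Q = k}"
    using zero_blocks_subset_realizable outer_of_realizable flat_dim_outer_of
    by (fastforce simp: outer_slice_def)
qed

lemma finite_outer_slice: "finite (outer_slice n k t)"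
  using finite_realizable by (simp add: outer_slice_def)

lemma card_outer_slice:
  assumes "t \<in> outer_params n"
  shows "card (outer_slice n k t) =
    (if dim_gain t \<le> k then h (inner_size n t) (k - dim_gain t) else 0)"
proof -
  have "inj_on (outer_of n t)
      {Q \<in> realizable (inner_size n t). flat_dim (inner_size n t) Q + dim_gain t = k}"
    using outer_of_inject[OF assms assms] by (intro inj_onI) blast
  then show ?thesis by (simp add: outer_slice_def card_image card_realizable_dim_add)
qed

lemma h_recursion_params:
  "h n k = zero_block_count n k +
    (\<Sum>t\<in>outer_params n. if dim_gain t \<le> k then h (inner_size n t) (k - dim_gain t) else 0)"
proof -
  let ?A = "{Q \<in> zero_blocks n. flat_dim n Q = k}"
  have "finite ?A"
    by (rule finite_subset[OF _ finite_realizable]) (use zero_blocks_subset_realizable in auto)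
  have "?A \<inter> (\<Union>t\<in>outer_params n. outer_slice n k t) = {}"
    using outer_of_neq_zero_block by (auto simp: outer_slice_def zero_blocks_def)
  moreover have "outer_slice n k t1 \<inter> outer_slice n k t2 = {}"
    if "t1 \<in> outer_params n" "t2 \<in> outer_params n" "t1 \<noteq> t2" for t1 t2
    using outer_of_inject[OF that(1,2)] that(3) by (fastforce simp: outer_slice_def)
  ultimately have "card (?A \<union> (\<Union>t\<in>outer_params n. outer_slice n k t)) =
      card ?A + (\<Sum>t\<in>outer_params n. card (outer_slice n k t))"
    using \<open>finite ?A\<close> finite_outer_slice finite_outer_params
    by (simp add: card_Un_disjoint card_UN_disjoint)
  then show ?thesis
    by (simp add: h_eq_card_realizable realizable_dim_decomposition card_zero_blocks_dim
        card_outer_slice cong: sum.cong)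
qed

fun param_size :: "nat \<times> nat \<times> nat \<times> nat \<Rightarrow> nat" where
  "param_size (u, p, q, w) = u + p + q + w"

definition outer_count :: "nat \<Rightarrow> nat \<Rightarrow> nat" where
  "outer_count a b = (if 1 \<le> b \<and> b < a then b * (a - b) else 0)"

text \<open>For fixed \<open>u + p + q + w = a\<close> and \<open>u + w + 1 = b\<close> a tuple is determined by the free choices
  \<open>u < b\<close> and \<open>1 \<le> p \<le> a - b\<close>.\<close>

lemma card_outer_params_fiber:
  assumes "a \<le> n"
  shows "card {t \<in> outer_params n. param_size t = a \<and> dim_gain t = b} = outer_count a b"
proof (cases "1 \<le> b \<and> b < a")
  case True
  define f where "f = (\<lambda>(u, p). (u, p, a - b + 1 - p, b - 1 - (u :: nat)))"
  have "{t \<in> outer_params n. param_size t = a \<and> dim_gain t = b} = f ` ({..<b} \<times> {1..a - b})"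
  proof
    show "{t \<in> outer_params n. param_size t = a \<and> dim_gain t = b} \<subseteq> f ` ({..<b} \<times> {1..a - b})"
    proof
      fix t assume t: "t \<in> {t \<in> outer_params n. param_size t = a \<and> dim_gain t = b}"
      obtain u p q w where "t = (u, p, q, w)" by (cases t)
      then have "(u, p) \<in> {..<b} \<times> {1..a - b}" "t = f (u, p)"
        using t by (auto simp: outer_params_def f_def)
      then show "t \<in> f ` ({..<b} \<times> {1..a - b})" by blast
    qed
    show "f ` ({..<b} \<times> {1..a - b}) \<subseteq> {t \<in> outer_params n. param_size t = a \<and> dim_gain t = b}"
      using True assms by (auto simp: f_def outer_params_def)
  qed
  moreover have "inj_on f ({..<b} \<times> {1..a - b})" by (auto simp: f_def inj_on_def)
  ultimately show ?thesis using True by (simp add: card_image outer_count_def)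
next
  case False
  then have "{t \<in> outer_params n. param_size t = a \<and> dim_gain t = b} = {}"
    by (auto simp: outer_params_def)
  then have "card {t \<in> outer_params n. param_size t = a \<and> dim_gain t = b} = 0"
    by (simp only: card.empty)
  then show ?thesis using False by (simp add: outer_count_def)
qed

lemma h_recursion:
  "h n k = zero_block_count n k + (\<Sum>i\<le>n. \<Sum>j\<le>k. outer_count i j * h (n - i) (k - j))"
proof -
  define G where "G = (\<lambda>(a, b). if b \<le> k then h (n - a) (k - b) else 0)"
  define \<phi> where "\<phi> t = (param_size t, dim_gain t)" for t
  have "(\<Sum>t\<in>outer_params n. if dim_gain t \<le> k then h (inner_size n t) (k - dim_gain t) else 0)
      = (\<Sum>t\<in>outer_params n. G (\<phi> t))"
    by (rule sum.cong) (auto simp: G_def \<phi>_def)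
  also have "\<dots> = (\<Sum>y\<in>{..n} \<times> {..n}. \<Sum>t\<in>{t \<in> outer_params n. \<phi> t = y}. G (\<phi> t))"
    by (rule sum.group[symmetric]) (use finite_outer_params in \<open>auto simp: \<phi>_def outer_params_def\<close>)
  also have "\<dots> = (\<Sum>(a, b)\<in>{..n} \<times> {..n}. outer_count a b * G (a, b))"
    using card_outer_params_fiber by (intro sum.cong) (auto simp: \<phi>_def)
  also have "\<dots> = (\<Sum>i\<le>n. \<Sum>j\<le>k. outer_count i j * h (n - i) (k - j))"
    unfolding sum.cartesian_product[symmetric]
  proof (rule sum.cong)
    fix i assume "i \<in> {..n}"
    have "(\<Sum>j\<le>n. outer_count i j * G (i, j)) = (\<Sum>j\<le>min n k. outer_count i j * G (i, j))"
      by (rule sum.mono_neutral_cong_right) (auto simp: G_def)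
    also have "\<dots> = (\<Sum>j\<le>k. outer_count i j * h (n - i) (k - j))"
      by (rule sum.mono_neutral_cong_left) (use \<open>i \<in> {..n}\<close> in \<open>auto simp: G_def outer_count_def\<close>)
    finally show "(\<Sum>j\<le>n. outer_count i j * G (i, j)) =
        (\<Sum>j\<le>k. outer_count i j * h (n - i) (k - j))" .
  qed simp
  finally show ?thesis using h_recursion_params by simp
qed

section \<open>The generating function\<close>

unbundle fps_syntax

lemma fps_mult_inverse_eq_1:
  fixes f :: "'a :: division_ring fps fps"
  assumes "f $ 0 = 1"
  shows "f * inverse f = 1"
proof -
  have "inverse f = fps_right_inverse f (inverse (f $ 0))" by (rule fps_inverse_def)
  then show ?thesis using fps_right_inverse[of f 1] assms by simp
qed

lemma fps_nth_mult_1_minus_S: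
  "(X * (1 - S)) $ n $ k = X $ n $ k - (if n = 0 then 0 else X $ (n - 1) $ k)"
  for X :: "rat fps fps"
  by (simp add: S_def algebra_simps)

lemma fps_nth_mult_1_minus_ST:
  "(X * (1 - S * T)) $ n $ k = X $ n $ k - (if n = 0 \<or> k = 0 then 0 else X $ (n - 1) $ (k - 1))"
  for X :: "rat fps fps"
proof -
  have "X * (1 - S * T) = X - fps_X * (X * T)" by (simp add: S_def algebra_simps)
  then show ?thesis by (simp add: T_def)
qed

definition zero_block_series :: "rat fps fps" where
  "zero_block_series = Abs_fps (\<lambda>n. Abs_fps (\<lambda>k. of_nat (zero_block_count n k)))"

definition outer_series :: "rat fps fps" where
  "outer_series = Abs_fps (\<lambda>a. Abs_fps (\<lambda>b. of_nat (outer_count a b)))"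

lemma H_eq_zero_block_series_plus: "H = zero_block_series + outer_series * H"
proof (intro fps_ext)
  fix n k
  have "(outer_series * H) $ n $ k = (\<Sum>i\<le>n. \<Sum>j\<le>k. of_nat (outer_count i j * h (n - i) (k - j)))"
    by (simp add: fps_mult_nth fps_sum_nth atLeast0AtMost outer_series_def H_def)
  then show "H $ n $ k = (zero_block_series + outer_series * H) $ n $ k"
    by (subst (1) H_def, subst h_recursion) (simp add: zero_block_series_def)
qed

lemma outer_series_mult: "outer_series * (1 - S * T)^2 * (1 - S)^2 = S^2 * T"
proof -
  have "outer_series * (1 - S * T) =
      Abs_fps (\<lambda>a. Abs_fps (\<lambda>b. if 1 \<le> b \<and> b < a then of_nat (a - b) else 0))"
    by (intro fps_ext, simp add: fps_nth_mult_1_minus_ST outer_series_def outer_count_def,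
        auto simp: of_nat_diff algebra_simps)
  also have "\<dots> * (1 - S * T) =
      Abs_fps (\<lambda>a. Abs_fps (\<lambda>b. if b = 1 \<and> b < a then of_nat (a - b) else 0))"
    by (intro fps_ext, simp add: fps_nth_mult_1_minus_ST, auto simp: of_nat_diff algebra_simps)
  also have "\<dots> * (1 - S) = Abs_fps (\<lambda>a. Abs_fps (\<lambda>b. if b = 1 \<and> b < a then 1 else 0))"
    by (intro fps_ext, simp add: fps_nth_mult_1_minus_S, auto simp: of_nat_diff algebra_simps)
  also have "\<dots> * (1 - S) = S^2 * T"
    by (intro fps_ext, simp add: fps_nth_mult_1_minus_S S_def T_def power2_eq_square,
        auto simp: algebra_simps)
  finally show ?thesis by (simp add: power2_eq_square algebra_simps)
qed

lemma zero_block_series_mult: "zero_block_series * (1 - S * T)^2 * (1 - S) = 1 - S * T + S^2 * T"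
proof -
  have "zero_block_series * (1 - S * T) =
      Abs_fps (\<lambda>n. Abs_fps (\<lambda>k. if (n = 0 \<and> k = 0) \<or> k < n then 1 else 0))"
    by (intro fps_ext, simp add: fps_nth_mult_1_minus_ST zero_block_series_def zero_block_count_def,
        auto simp: algebra_simps)
  also have "\<dots> * (1 - S * T) =
      Abs_fps (\<lambda>n. Abs_fps (\<lambda>k. (if k = 0 then 1 else 0) - (if n = 1 \<and> k = 1 then 1 else 0)))"
    by (intro fps_ext, simp add: fps_nth_mult_1_minus_ST, auto simp: algebra_simps)
  also have "\<dots> * (1 - S) = 1 - S * T + S^2 * T"
    by (intro fps_ext, simp add: fps_nth_mult_1_minus_S S_def T_def power2_eq_square,
        auto simp: algebra_simps)
  finally show ?thesis by (simp add: power2_eq_square algebra_simps)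
qed

theorem theorem1p10:
  "H = (1 - S) * (1 - S * T + S^2 * T) *
    inverse (1 - 2*S + S^2 - 2*S*T + 3*S^2*T - 2*S^3*T + S^2*T^2 - 2*S^3*T^2 + S^4*T^2)"
proof -
  define D where "D = 1 - 2*S + S^2 - 2*S*T + 3*S^2*T - 2*S^3*T + S^2*T^2 - 2*S^3*T^2 + S^4*T^2"
  have D: "D = (1 - S * T)^2 * (1 - S)^2 - S^2 * T"
    unfolding D_def by (simp add: power2_eq_square power3_eq_cube power4_eq_xxxx algebra_simps)
  have "H * D = H * ((1 - S * T)^2 * (1 - S)^2) - S^2 * T * H"
    unfolding D by (simp add: algebra_simps)
  also have "\<dots> = (zero_block_series + outer_series * H) * ((1 - S * T)^2 * (1 - S)^2) - S^2 * T * H"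
    by (simp only: H_eq_zero_block_series_plus[symmetric])
  also have "\<dots> = zero_block_series * (1 - S * T)^2 * (1 - S) * (1 - S)
      + (outer_series * (1 - S * T)^2 * (1 - S)^2) * H - S^2 * T * H"
    by (simp add: algebra_simps power2_eq_square)
  also have "\<dots> = (1 - S) * (1 - S * T + S^2 * T)"
    unfolding outer_series_mult zero_block_series_mult by (simp add: algebra_simps)
  finally have HD: "H * D = (1 - S) * (1 - S * T + S^2 * T)" .
  have "D * inverse D = 1"
    by (rule fps_mult_inverse_eq_1) (simp add: D_def S_def T_def)
  then have "H = H * D * inverse D" by (simp add: mult.assoc)
  also have "\<dots> = (1 - S) * (1 - S * T + S^2 * T) * inverse D" by (simp only: HD)
  finally show ?thesis by (simp only: D_def)
qed

end
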